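(* In the setting described in the context, $\sum_{i=1}^{m-1} L_1(\overline{p}_i,\overline{q}_i)\le 4\cdot L_1(p_1',t)$, where $p_1'$ is the vertical projection of $p_1$ onto $\ell_t^-$ and $L_1$ denotes the $L_1$ distance.
   Context: $P$ is a finite set of points in the plane, $s,t\in P$ distinct, and coordinates are chosen so that $t=(0,0)$ and $s$ lies in $C_2^t$ below the line $\ell_t^-=\{x+y=0\}$. Cones: $C_0^v=\{x\ge v_x,y\le v_y\}$, $C_1^v=\{x\ge v_x,y\ge v_y\}$, $C_2^v=\{x\le v_x,y\ge v_y\}$, $C_3^v=\{x\le v_x,y\le v_y\}$ with bisector directions $(1,-1),(1,1),(-1,1),(-1,-1)$. The $\Theta_4$-graph of $P$ has, for each $v\in P$ and cone $C_i^v$ containing a point of $P\setminus\{v\}$, a directed edge from $v$ to a point $w$ of $(P\setminus\{v\})\cap C_i^v$ minimizing the projection of $w-v$ onto the bisector direction (the neighbour of $v$ in $C_i^v$). For a point $p$, $\ell_p^+$ is the line through $p$ of slope $+1$, and $\overline{p}$ denotes the intersection point of $\ell_t^-$ and $\ell_p^+$. Algorithm: for a vertex $v$, let $T(v,\ell_t^-)=C_1^v\cap\{x+y\le0\}$ if $v_x+v_y<0$, $T(v,\ell_t^-)=C_3^v\cap\{x+y\ge0\}$ if $v_x+v_y>0$, and $\{v\}$ if $v_x+v_y=0$; $v$ is clean if $T(v,\ell_t^-)$ contains no point of $P$ other than $v$. Starting at $v=s$, while $v\ne t$: if $v$ is not clean, take a sweeping step (go to the neighbour of $v$ in $C_1^v$,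 resp. $C_3^v$); otherwise take a greedy step (go to the neighbour of $v$ in the cone $C_i^v$ containing $t$). Let $(p_1,q_1),\dots,(p_{m-1},q_{m-1})$ be, in order, the edges traversed by greedy steps, and set $p_m=t$. *)

theory Defs
  imports Complex_Main
begin

type_synonym pt = "real \<times> real"

definition cone :: "nat \<Rightarrow> pt \<Rightarrow> pt set" where
  "cone i v =
     (if i = 0 then {w. fst w \<ge> fst v \<and> snd w \<le> snd v}
      else if i = 1 then {w. fst w \<ge> fst v \<and> snd w \<ge> snd v}
      else if i = 2 then {w. fst w \<le> fst v \<and> snd w \<ge> snd v}
      else {w. fst w \<le> fst v \<and> snd w \<le> snd v})"

definition bisector :: "nat \<Rightarrow> pt" where
  "bisector i =
     (if i = 0 then (1, -1) else if i = 1 then (1, 1)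
      else if i = 2 then (-1, 1) else (-1, -1))"

definition proj :: "nat \<Rightarrow> pt \<Rightarrow> pt \<Rightarrow> real" where
  "proj i v w = ((fst w - fst v) * fst (bisector i) + (snd w - snd v) * snd (bisector i)) / sqrt 2"

definition is_neighbour :: "pt set \<Rightarrow> pt \<Rightarrow> nat \<Rightarrow> pt \<Rightarrow> bool" where
  "is_neighbour P v i w \<longleftrightarrow>
     w \<in> (P - {v}) \<inter> cone i v \<and> (\<forall>u \<in> (P - {v}) \<inter> cone i v. proj i v w \<le> proj i v u)"

definition theta4_nbr :: "pt set \<Rightarrow> (pt \<Rightarrow> nat \<Rightarrow> pt) \<Rightarrow> bool" where
  "theta4_nbr P nbr \<longleftrightarrow>
     (\<forall>v \<in> P. \<forall>i < 4. (P - {v}) \<inter> cone i v \<noteq> {} \<longrightarrow> is_neighbour P v i (nbr v i))"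

text \<open>The region T(v, l_t^-) for the line x + y = 0.\<close>
definition Treg :: "pt \<Rightarrow> pt set" where
  "Treg v =
     (if fst v + snd v < 0 then cone 1 v \<inter> {w. fst w + snd w \<le> 0}
      else if fst v + snd v > 0 then cone 3 v \<inter> {w. fst w + snd w \<ge> 0}
      else {v})"

definition clean :: "pt set \<Rightarrow> pt \<Rightarrow> bool" where
  "clean P v \<longleftrightarrow> Treg v \<inter> P \<subseteq> {v}"

definition route_step :: "pt set \<Rightarrow> (pt \<Rightarrow> nat \<Rightarrow> pt) \<Rightarrow> pt \<Rightarrow> pt \<Rightarrow> pt \<Rightarrow> bool" where
  "route_step P nbr t v w \<longleftrightarrow>
     (if \<not> clean P v then w = nbr v (if fst v + snd v < 0 then 1 else 3)
      else (\<exists>i < 4. t \<in> cone i v \<and> w = nbr v i))"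

definition is_route :: "pt set \<Rightarrow> (pt \<Rightarrow> nat \<Rightarrow> pt) \<Rightarrow> pt \<Rightarrow> pt \<Rightarrow> pt list \<Rightarrow> bool" where
  "is_route P nbr s t vs \<longleftrightarrow>
     vs \<noteq> [] \<and> hd vs = s \<and> last vs = t \<and>
     (\<forall>j < length vs - 1. vs ! j \<noteq> t \<and> route_step P nbr t (vs ! j) (vs ! Suc j))"

text \<open>The edges (p_1,q_1),...,(p_{m-1},q_{m-1}) traversed by greedy steps, in order.\<close>
definition greedy_edges :: "pt set \<Rightarrow> pt list \<Rightarrow> (pt \<times> pt) list" where
  "greedy_edges P vs = [(vs ! j, vs ! Suc j). j \<leftarrow> [0..<length vs - 1], clean P (vs ! j)]"

text \<open>p_1 (the start of the first greedy edge; p_m = t if there is none).\<close>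
definition first_greedy :: "pt set \<Rightarrow> pt list \<Rightarrow> pt \<Rightarrow> pt" where
  "first_greedy P vs t = (if greedy_edges P vs = [] then t else fst (hd (greedy_edges P vs)))"

text \<open>overline p: intersection of x + y = 0 with the slope +1 line through p.\<close>
definition bar :: "pt \<Rightarrow> pt" where
  "bar p = ((fst p - snd p) / 2, (snd p - fst p) / 2)"

definition vproj :: "pt \<Rightarrow> pt" where
  "vproj p = (fst p, - fst p)"

definition L1 :: "pt \<Rightarrow> pt \<Rightarrow> real" where
  "L1 p q = \<bar>fst p - fst q\<bar> + \<bar>snd p - snd q\<bar>"

end

theory Submission
  imports Defs
begin

(* With diag p = p_x - p_y one has L1(bar p, bar q) = |diag p - diag q|.  No step of the route
   increases the L-infinity distance to t, and the route never revisits a vertex, so every vertex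
   from p_1 on lies in the square of radius a = |p_1|_inf, and the right-hand side equals 8a.
   Split the greedy edges (p, q) into four classes by the quadrant C_2^t or C_0^t of p and by the
   side of l_t^- it lies on.  For p in C_2^t the greedy step goes to the point q of C_0^p minimising
   diag, so diag p <= diag q <= diag t = 0; as p is clean, every later vertex on the same side of
   l_t^- lies in C_0^p and so has diag at least diag q.  Hence within a class the intervals
   [diag p, diag q] are disjoint, ordered along the route and contained in [-2a, 0], so their total
   length is at most 2a.  The case p in C_0^t is symmetric. *)

lemma sum_list_sorted_intervals_le:
  fixes lo hi :: "'a \<Rightarrow> 'b::linordered_ab_group_add"
  assumes "\<forall>k\<in>set ks. A \<le> lo k \<and> lo k \<le> hi k \<and> hi k \<le> B"
    and "sorted_wrt (\<lambda>i j. hi i \<le> lo j) ks" and "A \<le> B"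
  shows "(\<Sum>k\<leftarrow>ks. hi k - lo k) \<le> B - A"
  using assms
proof (induction ks arbitrary: A)
  case (Cons k ks)
  then have "(\<Sum>k\<leftarrow>ks. hi k - lo k) \<le> B - hi k" by simp
  moreover have "A \<le> lo k" using Cons.prems(1) by simp
  ultimately show ?case by (simp add: algebra_simps) (metis add.commute add_mono)
qed simp

lemma sum_list_partition:
  fixes g :: "'a \<Rightarrow> 'c::finite" and f :: "'a \<Rightarrow> 'b::comm_monoid_add"
  shows "(\<Sum>x\<leftarrow>xs. f x) = (\<Sum>c\<in>UNIV. \<Sum>x\<leftarrow>filter (\<lambda>x. g x = c) xs. f x)"
proof (induction xs)
  case (Cons x xs)
  have "(\<Sum>c\<in>UNIV. \<Sum>y\<leftarrow>filter (\<lambda>y. g y = c) (x # xs). f y)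
      = (\<Sum>c\<in>UNIV. (if g x = c then f x else 0) + (\<Sum>y\<leftarrow>filter (\<lambda>y. g y = c) xs. f y))"
    by (rule sum.cong) auto
  also have "\<dots> = f x + (\<Sum>y\<leftarrow>xs. f y)"
    by (simp add: sum.distrib Cons.IH)
  finally show ?case by simp
qed simp

definition diag :: "pt \<Rightarrow> real" where
  "diag p = fst p - snd p"

definition linf :: "pt \<Rightarrow> real" where
  "linf p = max \<bar>fst p\<bar> \<bar>snd p\<bar>"

lemma L1_bar: "L1 (bar p) (bar q) = \<bar>diag p - diag q\<bar>"
  by (simp add: L1_def bar_def diag_def abs_if field_simps)

lemma proj_le_proj_iff:
  "proj 0 v w \<le> proj 0 v u \<longleftrightarrow> diag w \<le> diag u"
  "proj 1 v w \<le> proj 1 v u \<longleftrightarrow> fst w + snd w \<le> fst u + snd u"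
  "proj 2 v w \<le> proj 2 v u \<longleftrightarrow> diag u \<le> diag w"
  "proj 3 v w \<le> proj 3 v u \<longleftrightarrow> fst u + snd u \<le> fst w + snd w"
  by (auto simp: proj_def bisector_def diag_def divide_le_cancel)

lemma theta4_nbr_is_neighbour:
  assumes "theta4_nbr P nbr" "v \<in> P" "i < 4" "u \<in> P" "u \<noteq> v" "u \<in> cone i v"
  shows "is_neighbour P v i (nbr v i)"
  using assms unfolding theta4_nbr_def by blast

lemma not_clean_sum_neq_0: "\<not> clean P v \<Longrightarrow> fst v + snd v \<noteq> 0"
  by (auto simp: clean_def Treg_def)

lemma greedy_step_nbr:
  assumes "t = (0, 0)" "t \<in> P" "v \<noteq> t" "clean P v" "route_step P nbr t v w"
  shows "if v \<in> cone 2 t then w = nbr v 0 else v \<in> cone 0 t \<and> w = nbr v 2"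
proof -
  obtain i where i: "i < 4" "t \<in> cone i v" "w = nbr v i"
    using assms(4,5) unfolding route_step_def by auto
  have "t \<notin> Treg v"
    using assms(2-4) unfolding clean_def by auto
  moreover have "fst v \<noteq> 0 \<or> snd v \<noteq> 0"
    using assms(1,3) by (cases v) auto
  ultimately have "i \<noteq> 1 \<and> i \<noteq> 3"
    using assms(1) i(2) by (auto simp: Treg_def cone_def)
  then have "i = 0 \<or> i = 2" using i(1) by auto
  then show ?thesis
    using assms(1,3) i by (cases v) (auto simp: cone_def)
qed

lemma route_step_unique:
  assumes "t = (0, 0)" "t \<in> P" "v \<noteq> t" "route_step P nbr t v w" "route_step P nbr t v w'"
  shows "w = w'"
  using assms greedy_step_nbr[OF assms(1-3) _ assms(4)] greedy_step_nbr[OF assms(1-3) _ assms(5)]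
  unfolding route_step_def by (auto split: if_splits)

lemma greedy_step_from_cone2:
  assumes "theta4_nbr P nbr" "t = (0, 0)" "t \<in> P" "v \<in> P" "v \<noteq> t" "clean P v"
    "route_step P nbr t v w" "v \<in> cone 2 t"
  shows "w \<in> P" "w \<in> cone 0 v"
    and "\<And>u. u \<in> P \<Longrightarrow> u \<noteq> v \<Longrightarrow> u \<in> cone 0 v \<Longrightarrow> diag w \<le> diag u"
proof -
  have "is_neighbour P v 0 (nbr v 0)"
    using theta4_nbr_is_neighbour[OF assms(1,4) _ assms(3) assms(5)[symmetric]] assms(2,8)
    by (auto simp: cone_def)
  moreover have "w = nbr v 0" using greedy_step_nbr[OF assms(2,3,5-7)] assms(8) by simp
  ultimately show "w \<in> P" "w \<in> cone 0 v"
    and "\<And>u. u \<in> P \<Longrightarrow> u \<noteq> v \<Longrightarrow> u \<in> cone 0 v \<Longrightarrow> diag w \<le> diag u"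
    by (auto simp: is_neighbour_def proj_le_proj_iff)
qed

lemma greedy_step_from_cone0:
  assumes "theta4_nbr P nbr" "t = (0, 0)" "t \<in> P" "v \<in> P" "v \<noteq> t" "clean P v"
    "route_step P nbr t v w" "v \<notin> cone 2 t"
  shows "v \<in> cone 0 t" "w \<in> P" "w \<in> cone 2 v"
    and "\<And>u. u \<in> P \<Longrightarrow> u \<noteq> v \<Longrightarrow> u \<in> cone 2 v \<Longrightarrow> diag u \<le> diag w"
proof -
  show v0: "v \<in> cone 0 t" using greedy_step_nbr[OF assms(2,3,5-7)] assms(8) by simp
  have "is_neighbour P v 2 (nbr v 2)"
    using theta4_nbr_is_neighbour[OF assms(1,4) _ assms(3) assms(5)[symmetric]] assms(2) v0
    by (auto simp: cone_def)
  moreover have "w = nbr v 2" using greedy_step_nbr[OF assms(2,3,5-7)] assms(8) by simp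
  ultimately show "w \<in> P" "w \<in> cone 2 v"
    and "\<And>u. u \<in> P \<Longrightarrow> u \<noteq> v \<Longrightarrow> u \<in> cone 2 v \<Longrightarrow> diag u \<le> diag w"
    by (auto simp: is_neighbour_def proj_le_proj_iff)
qed

lemma sweep_step:
  assumes "theta4_nbr P nbr" "v \<in> P" "\<not> clean P v" "route_step P nbr t v w"
  shows "w \<in> P"
    and "fst v + snd v < 0 \<Longrightarrow> w \<in> cone 1 v \<and> fst w + snd w \<le> 0"
    and "fst v + snd v > 0 \<Longrightarrow> w \<in> cone 3 v \<and> fst w + snd w \<ge> 0"
proof -
  obtain u where u: "u \<in> Treg v" "u \<in> P" "u \<noteq> v"
    using assms(3) unfolding clean_def by auto
  have nb: "is_neighbour P v i w"
    if "i < 4" "w = nbr v i" "u \<in> cone i v" for i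
    using theta4_nbr_is_neighbour[OF assms(1,2) that(1) u(2,3) that(3)] that(2) by simp
  consider "fst v + snd v < 0" | "fst v + snd v > 0"
    using not_clean_sum_neq_0[OF assms(3)] by linarith
  then show "w \<in> P"
    and "fst v + snd v < 0 \<Longrightarrow> w \<in> cone 1 v \<and> fst w + snd w \<le> 0"
    and "fst v + snd v > 0 \<Longrightarrow> w \<in> cone 3 v \<and> fst w + snd w \<ge> 0"
  proof cases
    case 1
    then have "is_neighbour P v 1 w"
      using nb assms(3,4) u(1) by (simp add: route_step_def Treg_def)
    moreover have "u \<in> cone 1 v" "fst u + snd u \<le> 0" using u(1) 1 by (simp_all add: Treg_def)
    ultimately show "w \<in> P" "w \<in> cone 1 v \<and> fst w + snd w \<le> 0"
      using u(2,3) unfolding is_neighbour_def proj_le_proj_iff by force+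
  next
    case 2
    then have "is_neighbour P v 3 w"
      using nb assms(3,4) u(1) by (simp add: route_step_def Treg_def)
    moreover have "u \<in> cone 3 v" "fst u + snd u \<ge> 0" using u(1) 2 by (simp_all add: Treg_def)
    ultimately show "w \<in> P" "w \<in> cone 3 v \<and> fst w + snd w \<ge> 0"
      using u(2,3) unfolding is_neighbour_def proj_le_proj_iff by force+
  qed
qed

lemma linf_route_step:
  assumes "theta4_nbr P nbr" "t = (0, 0)" "t \<in> P" "v \<in> P" "v \<noteq> t" "route_step P nbr t v w"
  shows "w \<in> P \<and> linf w \<le> linf v"
proof (cases "clean P v")
  case True
  show ?thesis
  proof (cases "v \<in> cone 2 t")
    case True
    with greedy_step_from_cone2[OF assms(1-5) \<open>clean P v\<close> assms(6)] assms(2,3,5)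
    show ?thesis by (fastforce simp: linf_def diag_def cone_def)
  next
    case False
    with greedy_step_from_cone0[OF assms(1-5) \<open>clean P v\<close> assms(6)] assms(2,3,5)
    show ?thesis by (fastforce simp: linf_def diag_def cone_def)
  qed
next
  case False
  with sweep_step[OF assms(1,4) False assms(6)] not_clean_sum_neq_0[OF False]
  show ?thesis by (fastforce simp: linf_def cone_def)
qed

lemma clean_same_side_in_cone0:
  assumes "clean P p" "p \<in> cone 2 (0, 0)" "u \<in> P" "u \<noteq> p" "linf u \<le> linf p"
    "fst u + snd u \<le> 0 \<longleftrightarrow> fst p + snd p \<le> 0"
  shows "u \<in> cone 0 p"
proof -
  have "u \<notin> Treg p" using assms(1,3,4) by (auto simp: clean_def)
  moreover have "\<bar>fst u\<bar> \<le> linf p" "\<bar>snd u\<bar> \<le> linf p"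
    using assms(5) by (auto simp: linf_def)
  moreover have "linf p = (if fst p + snd p \<le> 0 then - fst p else snd p)"
    using assms(2) by (auto simp: linf_def cone_def)
  ultimately show ?thesis
    using assms(6) by (auto simp: Treg_def cone_def abs_le_iff split: if_splits)
qed

lemma clean_same_side_in_cone2:
  assumes "clean P p" "p \<in> cone 0 (0, 0)" "u \<in> P" "u \<noteq> p" "linf u \<le> linf p"
    "fst u + snd u \<le> 0 \<longleftrightarrow> fst p + snd p \<le> 0"
  shows "u \<in> cone 2 p"
proof -
  have "u \<notin> Treg p" using assms(1,3,4) by (auto simp: clean_def)
  moreover have "\<bar>fst u\<bar> \<le> linf p" "\<bar>snd u\<bar> \<le> linf p"
    using assms(5) by (auto simp: linf_def)
  moreover have "linf p = (if fst p + snd p \<le> 0 then - snd p else fst p)"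
    using assms(2) by (auto simp: linf_def cone_def)
  ultimately show ?thesis
    using assms(6) by (auto simp: Treg_def cone_def abs_le_iff split: if_splits)
qed

lemma abs_diag_le_linf: "\<bar>diag p\<bar> \<le> 2 * linf p"
  by (auto simp: diag_def linf_def max_def abs_if)

definition greedy_class :: "pt \<Rightarrow> bool \<times> bool" where
  "greedy_class p = (p \<in> cone 2 (0, 0), fst p + snd p \<le> 0)"

locale theta4_route =
  fixes P :: "pt set" and nbr :: "pt \<Rightarrow> nat \<Rightarrow> pt" and s t :: pt and vs :: "pt list"
  assumes t_origin: "t = (0, 0)" and t_in_P: "t \<in> P" and s_in_P: "s \<in> P"
    and theta4: "theta4_nbr P nbr" and route: "is_route P nbr s t vs"
begin

lemma route_nth:
  shows "vs ! 0 = s" and "vs ! (length vs - 1) = t"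
    and "\<And>j. j < length vs - 1 \<Longrightarrow> vs ! j \<noteq> t \<and> route_step P nbr t (vs ! j) (vs ! Suc j)"
  using route unfolding is_route_def by (auto simp: hd_conv_nth last_conv_nth)

lemma route_in_P: "j < length vs \<Longrightarrow> vs ! j \<in> P"
proof (induction j)
  case 0
  then show ?case using route_nth(1) s_in_P by simp
next
  case (Suc j)
  then show ?case
    using linf_route_step[OF theta4 t_origin t_in_P] route_nth(3)[of j] by simp
qed

lemma linf_route_antimono:
  assumes "i \<le> j" "j < length vs"
  shows "linf (vs ! j) \<le> linf (vs ! i)"
  using assms
proof (induction j rule: dec_induct)
  case (step k)
  then have "linf (vs ! Suc k) \<le> linf (vs ! k)"
    using linf_route_step[OF theta4 t_origin t_in_P route_in_P] route_nth(3)[of k] by simp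
  with step show ?case by simp
qed simp

lemma distinct_route: "distinct vs"
proof -
  \<comment> \<open>routing is deterministic, so a repeated vertex would make the route periodic\<close>
  have shift: "vs ! (i + k) = vs ! (j + k)"
    if "vs ! i = vs ! j" "i < j" "j + k < length vs" for i j k
    using that
  proof (induction k)
    case (Suc k)
    then have "vs ! (j + k) \<noteq> t" "route_step P nbr t (vs ! (j + k)) (vs ! Suc (j + k))"
      and "route_step P nbr t (vs ! (j + k)) (vs ! Suc (i + k))"
      using route_nth(3)[of "i + k"] route_nth(3)[of "j + k"] by simp_all
    then show ?case using route_step_unique[OF t_origin t_in_P] by simp
  qed simp
  have "vs ! i \<noteq> vs ! j" if "i < j" "j < length vs" for i j
  proof
    assume "vs ! i = vs ! j"
    then have "vs ! (i + (length vs - 1 - j)) = t"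
      using shift[of i j "length vs - 1 - j"] that route_nth(2) by simp
    moreover have "i + (length vs - 1 - j) < length vs - 1" using that by simp
    ultimately show False using route_nth(3) by blast
  qed
  then show ?thesis
    by (metis distinct_conv_nth linorder_neqE_nat)
qed

definition greedy_indices :: "nat list" where
  "greedy_indices = filter (\<lambda>j. clean P (vs ! j)) [0..<length vs - 1]"

lemma greedy_edges_eq: "greedy_edges P vs = map (\<lambda>j. (vs ! j, vs ! Suc j)) greedy_indices"
proof -
  have "concat (map (\<lambda>j. if clean P (vs ! j) then [(vs ! j, vs ! Suc j)] else []) js)
      = map (\<lambda>j. (vs ! j, vs ! Suc j)) (filter (\<lambda>j. clean P (vs ! j)) js)" for js
    by (induction js) auto
  then show ?thesis unfolding greedy_edges_def greedy_indices_def by simp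
qed

lemma mem_greedy_indices: "j \<in> set greedy_indices \<longleftrightarrow> j < length vs - 1 \<and> clean P (vs ! j)"
  by (auto simp: greedy_indices_def)

lemma sorted_greedy_indices: "sorted_wrt (<) greedy_indices"
  by (simp add: greedy_indices_def sorted_wrt_filter)

lemma greedy_indices_ge_hd: "greedy_indices = j0 # js \<Longrightarrow> j \<in> set greedy_indices \<Longrightarrow> j0 \<le> j"
  using sorted_greedy_indices by (auto simp: less_imp_le)

lemma greedy_step_nth_from_cone2:
  assumes "i \<in> set greedy_indices" "vs ! i \<in> cone 2 t"
  shows "vs ! Suc i \<in> cone 0 (vs ! i)" "diag (vs ! Suc i) \<le> 0"
    and "\<And>u. u \<in> P \<Longrightarrow> u \<noteq> vs ! i \<Longrightarrow> u \<in> cone 0 (vs ! i) \<Longrightarrow> diag (vs ! Suc i) \<le> diag u"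
proof -
  have i: "i < length vs - 1" "clean P (vs ! i)" using assms(1) by (simp_all add: mem_greedy_indices)
  have v: "vs ! i \<in> P" "vs ! i \<noteq> t" "route_step P nbr t (vs ! i) (vs ! Suc i)"
    using route_in_P[of i] route_nth(3)[OF i(1)] i(1) by simp_all
  note step = greedy_step_from_cone2[OF theta4 t_origin t_in_P v(1,2) i(2) v(3) assms(2)]
  show "vs ! Suc i \<in> cone 0 (vs ! i)"
    and "\<And>u. u \<in> P \<Longrightarrow> u \<noteq> vs ! i \<Longrightarrow> u \<in> cone 0 (vs ! i) \<Longrightarrow> diag (vs ! Suc i) \<le> diag u"
    by (fact step)+
  have "t \<in> cone 0 (vs ! i)" using assms(2) by (simp add: t_origin cone_def)
  then show "diag (vs ! Suc i) \<le> 0"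
    using step(3)[OF t_in_P v(2)[symmetric]] by (simp add: t_origin diag_def)
qed

lemma greedy_step_nth_from_cone0:
  assumes "i \<in> set greedy_indices" "vs ! i \<notin> cone 2 t"
  shows "vs ! i \<in> cone 0 t" "vs ! Suc i \<in> cone 2 (vs ! i)" "0 \<le> diag (vs ! Suc i)"
    and "\<And>u. u \<in> P \<Longrightarrow> u \<noteq> vs ! i \<Longrightarrow> u \<in> cone 2 (vs ! i) \<Longrightarrow> diag u \<le> diag (vs ! Suc i)"
proof -
  have i: "i < length vs - 1" "clean P (vs ! i)" using assms(1) by (simp_all add: mem_greedy_indices)
  have v: "vs ! i \<in> P" "vs ! i \<noteq> t" "route_step P nbr t (vs ! i) (vs ! Suc i)"
    using route_in_P[of i] route_nth(3)[OF i(1)] i(1) by simp_all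
  note step = greedy_step_from_cone0[OF theta4 t_origin t_in_P v(1,2) i(2) v(3) assms(2)]
  show "vs ! i \<in> cone 0 t" "vs ! Suc i \<in> cone 2 (vs ! i)"
    and "\<And>u. u \<in> P \<Longrightarrow> u \<noteq> vs ! i \<Longrightarrow> u \<in> cone 2 (vs ! i) \<Longrightarrow> diag u \<le> diag (vs ! Suc i)"
    by (fact step)+
  have "t \<in> cone 2 (vs ! i)" using step(1) by (simp add: t_origin cone_def)
  then show "0 \<le> diag (vs ! Suc i)"
    using step(4)[OF t_in_P v(2)[symmetric]] by (simp add: t_origin diag_def)
qed

lemma greedy_target_diag_le_later:
  assumes "i \<in> set greedy_indices" "vs ! i \<in> cone 2 t" "i < j" "j < length vs"
    and "greedy_class (vs ! j) = greedy_class (vs ! i)"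
  shows "diag (vs ! Suc i) \<le> diag (vs ! j)"
proof -
  have "vs ! j \<in> cone 0 (vs ! i)"
  proof (rule clean_same_side_in_cone0)
    show "clean P (vs ! i)" using assms(1) by (simp add: mem_greedy_indices)
    show "vs ! j \<noteq> vs ! i" using distinct_route assms(3,4) by (simp add: nth_eq_iff_index_eq)
  qed (use assms route_in_P linf_route_antimono in \<open>auto simp: greedy_class_def t_origin\<close>)
  then show ?thesis
    using greedy_step_nth_from_cone2(3)[OF assms(1,2)] route_in_P distinct_route assms(3,4)
    by (simp add: nth_eq_iff_index_eq)
qed

lemma later_diag_le_greedy_target:
  assumes "i \<in> set greedy_indices" "vs ! i \<notin> cone 2 t" "i < j" "j < length vs"
    and "greedy_class (vs ! j) = greedy_class (vs ! i)"
  shows "diag (vs ! j) \<le> diag (vs ! Suc i)"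
proof -
  have "vs ! j \<in> cone 2 (vs ! i)"
  proof (rule clean_same_side_in_cone2)
    show "clean P (vs ! i)" using assms(1) by (simp add: mem_greedy_indices)
    show "vs ! i \<in> cone 0 (0, 0)" using greedy_step_nth_from_cone0(1)[OF assms(1,2)] t_origin by simp
    show "vs ! j \<noteq> vs ! i" using distinct_route assms(3,4) by (simp add: nth_eq_iff_index_eq)
  qed (use assms route_in_P linf_route_antimono in \<open>auto simp: greedy_class_def\<close>)
  then show ?thesis
    using greedy_step_nth_from_cone0(4)[OF assms(1,2)] route_in_P distinct_route assms(3,4)
    by (simp add: nth_eq_iff_index_eq)
qed

lemma greedy_class_sum_le_cone2:
  assumes "0 \<le> a" and sorted: "sorted_wrt (<) ks" and greedy: "set ks \<subseteq> set greedy_indices"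
    and in_class: "\<forall>k\<in>set ks. vs ! k \<in> cone 2 t \<and> linf (vs ! k) \<le> a \<and> greedy_class (vs ! k) = c"
  shows "(\<Sum>j\<leftarrow>ks. \<bar>diag (vs ! j) - diag (vs ! Suc j)\<bar>) \<le> 2 * a"
proof -
  have edge: "- 2 * a \<le> diag (vs ! k) \<and> diag (vs ! k) \<le> diag (vs ! Suc k)
      \<and> diag (vs ! Suc k) \<le> 0"
    if "k \<in> set ks" for k
  proof -
    have k: "k \<in> set greedy_indices" "vs ! k \<in> cone 2 t" "linf (vs ! k) \<le> a"
      using that greedy in_class by auto
    show ?thesis
      using greedy_step_nth_from_cone2(1,2)[OF k(1,2)] abs_diag_le_linf[of "vs ! k"] k(3)
      by (auto simp: cone_def diag_def abs_le_iff)
  qed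
  have "(\<Sum>j\<leftarrow>ks. \<bar>diag (vs ! j) - diag (vs ! Suc j)\<bar>)
      = (\<Sum>j\<leftarrow>ks. diag (vs ! Suc j) - diag (vs ! j))"
    using edge by (intro arg_cong[where f = sum_list] map_cong) auto
  also have "\<dots> \<le> 0 - (- 2 * a)"
  proof (rule sum_list_sorted_intervals_le)
    show "sorted_wrt (\<lambda>i j. diag (vs ! Suc i) \<le> diag (vs ! j)) ks"
    proof (rule sorted_wrt_mono_rel[OF _ sorted])
      fix i j assume "i \<in> set ks" "j \<in> set ks" "i < j"
      with greedy in_class show "diag (vs ! Suc i) \<le> diag (vs ! j)"
        by (intro greedy_target_diag_le_later) (auto simp: subset_iff mem_greedy_indices)
    qed
  qed (use edge \<open>0 \<le> a\<close> in auto)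
  finally show ?thesis by simp
qed

lemma greedy_class_sum_le_cone0:
  assumes "0 \<le> a" and sorted: "sorted_wrt (<) ks" and greedy: "set ks \<subseteq> set greedy_indices"
    and in_class: "\<forall>k\<in>set ks. vs ! k \<notin> cone 2 t \<and> linf (vs ! k) \<le> a \<and> greedy_class (vs ! k) = c"
  shows "(\<Sum>j\<leftarrow>ks. \<bar>diag (vs ! j) - diag (vs ! Suc j)\<bar>) \<le> 2 * a"
proof -
  have edge: "- 2 * a \<le> - diag (vs ! k) \<and> - diag (vs ! k) \<le> - diag (vs ! Suc k)
      \<and> - diag (vs ! Suc k) \<le> 0"
    if "k \<in> set ks" for k
  proof -
    have k: "k \<in> set greedy_indices" "vs ! k \<notin> cone 2 t" "linf (vs ! k) \<le> a"
      using that greedy in_class by auto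
    show ?thesis
      using greedy_step_nth_from_cone0(2,3)[OF k(1,2)] abs_diag_le_linf[of "vs ! k"] k(3)
      by (auto simp: cone_def diag_def abs_le_iff)
  qed
  have "(\<Sum>j\<leftarrow>ks. \<bar>diag (vs ! j) - diag (vs ! Suc j)\<bar>)
      = (\<Sum>j\<leftarrow>ks. - diag (vs ! Suc j) - - diag (vs ! j))"
    using edge by (intro arg_cong[where f = sum_list] map_cong) auto
  also have "\<dots> \<le> 0 - (- 2 * a)"
  proof (rule sum_list_sorted_intervals_le)
    show "sorted_wrt (\<lambda>i j. - diag (vs ! Suc i) \<le> - diag (vs ! j)) ks"
    proof (rule sorted_wrt_mono_rel[OF _ sorted])
      fix i j assume "i \<in> set ks" "j \<in> set ks" "i < j"
      with greedy in_class show "- diag (vs ! Suc i) \<le> - diag (vs ! j)"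
        by (simp, intro later_diag_le_greedy_target) (auto simp: subset_iff mem_greedy_indices)
    qed
  qed (use edge \<open>0 \<le> a\<close> in auto)
  finally show ?thesis by simp
qed

lemma greedy_class_sum_le:
  assumes first: "greedy_indices = j0 # js"
  shows "(\<Sum>j\<leftarrow>filter (\<lambda>j. greedy_class (vs ! j) = c) greedy_indices.
            \<bar>diag (vs ! j) - diag (vs ! Suc j)\<bar>) \<le> 2 * linf (vs ! j0)"
proof -
  let ?ks = "filter (\<lambda>j. greedy_class (vs ! j) = c) greedy_indices"
  have a: "0 \<le> linf (vs ! j0)" by (simp add: linf_def)
  have ks: "sorted_wrt (<) ?ks" "set ?ks \<subseteq> set greedy_indices"
    using sorted_greedy_indices by (auto intro: sorted_wrt_filter)
  have in_class: "linf (vs ! k) \<le> linf (vs ! j0) \<and> greedy_class (vs ! k) = c"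
    and cone2_iff: "vs ! k \<in> cone 2 t \<longleftrightarrow> fst c" if "k \<in> set ?ks" for k
  proof -
    have "j0 \<le> k" "k < length vs"
      using that greedy_indices_ge_hd[OF first, of k] by (auto simp: mem_greedy_indices)
    then show "linf (vs ! k) \<le> linf (vs ! j0) \<and> greedy_class (vs ! k) = c"
      using that linf_route_antimono by simp
    show "vs ! k \<in> cone 2 t \<longleftrightarrow> fst c"
      using that by (auto simp: greedy_class_def t_origin)
  qed
  show ?thesis
  proof (cases "fst c")
    case True
    with in_class cone2_iff show ?thesis
      by (intro greedy_class_sum_le_cone2[OF a ks]) blast
  next
    case False
    with in_class cone2_iff show ?thesis
      by (intro greedy_class_sum_le_cone0[OF a ks]) blast
  qed
qed

lemma greedy_sum_le:
  "(\<Sum>(p, q)\<leftarrow>greedy_edges P vs. L1 (bar p) (bar q)) \<le> 8 * linf (first_greedy P vs t)"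
proof (cases greedy_indices)
  case Nil
  then show ?thesis by (simp add: greedy_edges_eq first_greedy_def t_origin linf_def)
next
  case (Cons j0 js)
  have "(\<Sum>(p, q)\<leftarrow>greedy_edges P vs. L1 (bar p) (bar q))
      = (\<Sum>j\<leftarrow>greedy_indices. \<bar>diag (vs ! j) - diag (vs ! Suc j)\<bar>)"
    by (simp add: greedy_edges_eq L1_bar o_def)
  also have "\<dots> = (\<Sum>c\<in>UNIV. \<Sum>j\<leftarrow>filter (\<lambda>j. greedy_class (vs ! j) = c) greedy_indices.
      \<bar>diag (vs ! j) - diag (vs ! Suc j)\<bar>)"
    by (rule sum_list_partition)
  also have "\<dots> \<le> (\<Sum>c\<in>(UNIV :: (bool \<times> bool) set). 2 * linf (vs ! j0))"
    by (rule sum_mono) (rule greedy_class_sum_le[OF Cons])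
  also have "\<dots> = 8 * linf (first_greedy P vs t)"
    by (simp add: first_greedy_def greedy_edges_eq Cons card_cartesian_product flip: UNIV_Times_UNIV)
  finally show ?thesis .
qed

lemma first_greedy_upper_left:
  assumes "s \<in> cone 2 t" "fst s + snd s \<le> 0"
  shows "first_greedy P vs t \<in> cone 2 t \<and> fst (first_greedy P vs t) + snd (first_greedy P vs t) \<le> 0"
proof (cases greedy_indices)
  case Nil
  then show ?thesis by (simp add: greedy_edges_eq first_greedy_def t_origin cone_def)
next
  case (Cons j0 js)
  have "j0 \<in> set greedy_indices" using Cons by simp
  then have j0: "j0 < length vs - 1" by (simp add: mem_greedy_indices)
  have sweeping: "\<not> clean P (vs ! k)" if "k < j0" for k
    using greedy_indices_ge_hd[OF Cons, of k] that j0 by (auto simp: mem_greedy_indices)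
  have "vs ! k \<in> cone 2 t \<and> fst (vs ! k) + snd (vs ! k) \<le> 0" if "k \<le> j0" for k
    using that
  proof (induction k)
    case 0
    then show ?case using assms route_nth(1) by simp
  next
    case (Suc k)
    then have k: "k < j0" "\<not> clean P (vs ! k)" using sweeping by simp_all
    have below: "fst (vs ! k) + snd (vs ! k) < 0"
      using Suc.IH k not_clean_sum_neq_0[OF k(2)] by fastforce
    have "k < length vs - 1" using k(1) j0 by simp
    then have "vs ! k \<in> P" "route_step P nbr t (vs ! k) (vs ! Suc k)"
      using route_in_P route_nth(3) by simp_all
    note sweep_step(2)[OF theta4 this(1) k(2) this(2) below]
    with Suc.IH k(1) show ?case by (auto simp: cone_def t_origin)
  qed
  then show ?thesis by (simp add: first_greedy_def greedy_edges_eq Cons)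
qed

end

theorem corollary2:
  fixes P :: "pt set" and s t :: pt and nbr :: "pt \<Rightarrow> nat \<Rightarrow> pt" and vs :: "pt list"
  assumes "finite P" and "s \<in> P" and "t \<in> P" and "s \<noteq> t"
    and "t = (0, 0)" and "s \<in> cone 2 t" and "fst s + snd s < 0"
    and "theta4_nbr P nbr"
    and "is_route P nbr s t vs"
  shows "(\<Sum>(p, q) \<leftarrow> greedy_edges P vs. L1 (bar p) (bar q))
           \<le> 4 * L1 (vproj (first_greedy P vs t)) t"
proof -
  interpret theta4_route P nbr s t vs
    using assms by unfold_locales
  let ?p1 = "first_greedy P vs t"
  have "?p1 \<in> cone 2 t" "fst ?p1 + snd ?p1 \<le> 0"
    using first_greedy_upper_left assms(6,7) by simp_all
  then have "4 * L1 (vproj ?p1) t = 8 * linf ?p1"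
    using assms(5) by (auto simp: L1_def vproj_def linf_def cone_def)
  with greedy_sum_le show ?thesis by simp
qed

end
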